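(* Let $d\ge3$, $z\in(-1,1)$ and $\xi\in\mathbb S^{d-1}$. Let $\mathrm d\mathscr C_z^{\xi}$ and $\mathrm d\mathscr C_0^{g_z(\xi)}$ be the volume forms of the oriented $(d-2)$-dimensional manifolds $\mathscr C_z^{\xi}$ and $\mathscr C_0^{g_z(\xi)}$. Then, at every $\eta\in\mathscr C_0^{g_z(\xi)}$, $$h_z^*\bigl(\mathrm d\mathscr C_z^{\xi}\bigr)=\Bigl(\frac{\sqrt{1-z^2}}{1+z\eta_d}\Bigr)^{d-2}\mathrm d\mathscr C_0^{g_z(\xi)}.$$ Moreover, for the volume form $\mathrm d\mathbb S^{d-1}$ of the sphere, at every $\eta\in\mathbb S^{d-1}$, $$h_z^*\bigl(\mathrm d\mathbb S^{d-1}\bigr)=\Bigl(\frac{\sqrt{1-z^2}}{1+z\eta_d}\Bigr)^{d-1}\mathrm d\mathbb S^{d-1}.$$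
   Context: $\mathbb S^{d-1}$ is the unit sphere in $\mathbb R^d$, and $\epsilon^1,\dots,\epsilon^d$ is the standard basis of $\mathbb R^d$. Orientation of the sphere: a basis $x^1,\dots,x^{d-1}$ of $T_\xi\mathbb S^{d-1}=\xi^\perp$ is positively oriented if $\det[\xi,x^1,\dots,x^{d-1}]>0$. Subspheres: for $\zeta\in\mathbb S^{d-1}$ and $t\in[-1,1]$ let $S(\zeta,t)=\{\eta\in\mathbb S^{d-1}:\langle\zeta,\eta\rangle=t\}$. A basis $e^1,\dots,e^{d-2}$ of $T_\eta S(\zeta,t)$ is positively oriented if $\det(\eta,\zeta,e^1,\dots,e^{d-2})>0$. The volume form is the $(d-2)$-form that equals $1$ on positively oriented orthonormal bases. Set $\mathscr C_z^{\xi}=S(\xi,z\xi_d)$. The maps $h_z$ and $g_z$ are $$h_z(\eta)=\sum_{i=1}^{d-1}\frac{\sqrt{1-z^2}}{1+z\eta_d}\eta_i\epsilon^i+\frac{z+\eta_d}{1+z\eta_d}\epsilon^d,$$ $$g_z(\xi)=(1-z^2\xi_d^2)^{-1/2}\Bigl(\sum_{i=1}^{d-1}\xi_i\epsilon^i+\sqrt{1-z^2}\,\xi_d\epsilon^d\Bigr).$$ The map $h_z$ sends $\mathscr C_0^{g_z(\xi)}$ onto $\mathscr C_z^{\xi}$. Pullbacks of forms are defined in the usual way via the Jacobian of $h_z$. *)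

theory Defs
  imports "HOL-Analysis.Analysis"
begin

(* Points of R^d are vectors  real^'n  with CARD('n) = d.  The index type is
   linearly ordered; the k-th coordinate (k = 1..d) is the k-th smallest index,
   so the d-th (last) coordinate is the index  Max UNIV. *)

definition rank_idx :: "'n::{finite,linorder} \<Rightarrow> nat" where
  "rank_idx i = card {j. j < i}"

definition lastidx :: "'n::{finite,linorder}" where
  "lastidx = Max UNIV"

definition lastc :: "real^'n::{finite,linorder} \<Rightarrow> real" where
  "lastc x = x $ lastidx"

definition detl :: "(real^'n::{finite,linorder}) list \<Rightarrow> real" where
  "detl vs = det (\<chi> (i::'n). vs ! rank_idx i)"

definition hz :: "real \<Rightarrow> real^'n::{finite,linorder} \<Rightarrow> real^'n::{finite,linorder}" where
  "hz z \<eta> = (\<chi> i. if i = lastidx then (z + lastc \<eta>) / (1 + z * lastc \<eta>)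
                     else sqrt (1 - z\<^sup>2) / (1 + z * lastc \<eta>) * \<eta> $ i)"

definition gz :: "real \<Rightarrow> real^'n::{finite,linorder} \<Rightarrow> real^'n::{finite,linorder}" where
  "gz z \<xi> = (1 / sqrt (1 - z\<^sup>2 * (lastc \<xi>)\<^sup>2)) *\<^sub>R
               (\<chi> i. if i = lastidx then sqrt (1 - z\<^sup>2) * \<xi> $ i else \<xi> $ i)"

definition subsph :: "real^'n::{finite,linorder} \<Rightarrow> real \<Rightarrow> (real^'n::{finite,linorder}) set" where
  "subsph \<zeta> t = {\<eta> \<in> sphere 0 1. \<zeta> \<bullet> \<eta> = t}"

definition Cz :: "real \<Rightarrow> real^'n::{finite,linorder} \<Rightarrow> (real^'n::{finite,linorder}) set" where
  "Cz z \<xi> = subsph \<xi> (z * lastc \<xi>)"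

definition tan_sphere :: "real^'n::{finite,linorder} \<Rightarrow> (real^'n::{finite,linorder}) set" where
  "tan_sphere \<eta> = {v. v \<bullet> \<eta> = 0}"

definition tan_subsph :: "real^'n::{finite,linorder} \<Rightarrow> real^'n::{finite,linorder} \<Rightarrow> (real^'n::{finite,linorder}) set" where
  "tan_subsph \<zeta> \<eta> = {v. v \<bullet> \<eta> = 0 \<and> v \<bullet> \<zeta> = 0}"

definition alt_form_on :: "(real^'n::{finite,linorder}) set \<Rightarrow> nat \<Rightarrow> ((real^'n::{finite,linorder}) list \<Rightarrow> real) \<Rightarrow> bool" where
  "alt_form_on V k \<omega> \<longleftrightarrow>
     (\<forall>vs. \<not> (length vs = k \<and> set vs \<subseteq> V) \<longrightarrow> \<omega> vs = 0) \<and>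
     (\<forall>vs i a b u w. length vs = k \<and> set vs \<subseteq> V \<and> i < k \<and> u \<in> V \<and> w \<in> V \<longrightarrow>
        \<omega> (vs[i := a *\<^sub>R u + b *\<^sub>R w]) = a * \<omega> (vs[i := u]) + b * \<omega> (vs[i := w])) \<and>
     (\<forall>vs i j. length vs = k \<and> set vs \<subseteq> V \<and> i < k \<and> j < k \<and> i \<noteq> j \<and> vs ! i = vs ! j
        \<longrightarrow> \<omega> vs = 0)"

definition onb_list :: "(real^'n::{finite,linorder}) set \<Rightarrow> nat \<Rightarrow> (real^'n::{finite,linorder}) list \<Rightarrow> bool" where
  "onb_list V k es \<longleftrightarrow> length es = k \<and> set es \<subseteq> V \<and> span (set es) = V \<and>
     (\<forall>i<k. \<forall>j<k. es ! i \<bullet> es ! j = (if i = j then 1 else 0))"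

definition volform :: "(real^'n::{finite,linorder}) set \<Rightarrow> nat \<Rightarrow> ((real^'n::{finite,linorder}) list \<Rightarrow> bool)
     \<Rightarrow> (real^'n::{finite,linorder}) list \<Rightarrow> real" where
  "volform V k posor = (THE \<omega>. alt_form_on V k \<omega> \<and>
      (\<forall>es. onb_list V k es \<and> posor es \<longrightarrow> \<omega> es = 1))"

definition dSphere :: "real^'n::{finite,linorder} \<Rightarrow> (real^'n::{finite,linorder}) list \<Rightarrow> real" where
  "dSphere \<eta> = volform (tan_sphere \<eta>) (CARD('n) - 1) (\<lambda>xs. detl (\<eta> # xs) > 0)"

definition dSub :: "real^'n::{finite,linorder} \<Rightarrow> real^'n::{finite,linorder} \<Rightarrow> (real^'n::{finite,linorder}) list \<Rightarrow> real" where
  "dSub \<zeta> \<eta> = volform (tan_subsph \<zeta> \<eta>) (CARD('n) - 2) (\<lambda>es. detl (\<eta> # \<zeta> # es) > 0)"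

end

theory Submission
  imports Defs
begin

text \<open>Write \<open>a = \<surd>(1 - z\<^sup>2) / (1 + z \<eta>\<^sub>d)\<close>, \<open>r = \<surd>(1 - z\<^sup>2 \<xi>\<^sub>d\<^sup>2)\<close> and \<open>g = g\<^sub>z(\<xi>)\<close>.
  The differential \<open>L\<close> of \<open>h\<^sub>z\<close> at a unit vector \<open>\<eta>\<close> has \<open>det L = a\<^bsup>d+1\<^esup>\<close> and satisfies
  \<open>L v \<bullet> h\<^sub>z(\<eta>) = a\<^sup>2 (v \<bullet> \<eta>)\<close>, and, when \<open>\<eta> \<bullet> g = 0\<close>, also \<open>L v \<bullet> \<xi> = a r (v \<bullet> g)\<close>.
  At \<open>\<eta>\<close> the volume form of the sphere is \<open>det [\<eta>, v\<^sub>1, \<dots>]\<close> and that of \<open>S(\<zeta>, t)\<close> is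
  \<open>det [\<eta>, \<zeta>, v\<^sub>1, \<dots>] / \<surd>(1 - t\<^sup>2)\<close>, restricted to the tangent space. Expanding
  \<open>det [L \<eta>, L g, L v\<^sub>1, \<dots>] = a\<^bsup>d+1\<^esup> det [\<eta>, g, v\<^sub>1, \<dots>]\<close> along the normals \<open>h\<^sub>z(\<eta>)\<close> and \<open>\<xi>\<close>
  of the image subsphere, the two identities for \<open>L\<close> contribute \<open>a\<^sup>2\<close> and \<open>a r\<close>, leaving the factor
  \<open>a\<^bsup>d-2\<^esup>\<close>; for the whole sphere a single normal contributes \<open>a\<^sup>2\<close>, leaving \<open>a\<^bsup>d-1\<^esup>\<close>.\<close>

section \<open>Determinants of lists of vectors\<close>

lemma rank_idx_less_card [simp]: "rank_idx (i::'n::{finite,linorder}) < CARD('n)"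
  unfolding rank_idx_def by (rule psubset_card_mono) auto

lemma inj_rank_idx: "inj (rank_idx :: 'n::{finite,linorder} \<Rightarrow> nat)"
proof -
  have "rank_idx i < rank_idx j" if "i < j" for i j :: 'n
    using that unfolding rank_idx_def by (intro psubset_card_mono) auto
  then show ?thesis
    by (metis injI linorder_neq_iff order_less_irrefl)
qed

lemma range_rank_idx: "range (rank_idx :: 'n::{finite,linorder} \<Rightarrow> nat) = {..<CARD('n)}"
proof -
  have "range (rank_idx :: 'n \<Rightarrow> nat) \<subseteq> {..<CARD('n)}"
    using rank_idx_less_card by auto
  moreover have "card (range (rank_idx :: 'n \<Rightarrow> nat)) = card {..<CARD('n)}"
    using card_image[OF inj_rank_idx] by simp
  ultimately show ?thesis
    by (simp add: card_subset_eq)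
qed

definition list_matrix :: "(real^'n::{finite,linorder}) list \<Rightarrow> real^'n::{finite,linorder}^'n::{finite,linorder}" where
  "list_matrix xs = (\<chi> i. xs ! rank_idx i)"

lemma detl_eq_det_list_matrix: "detl xs = det (list_matrix xs)"
  unfolding detl_def list_matrix_def ..

lemma row_list_matrix: "row i (list_matrix xs) = xs ! rank_idx i"
  by (simp add: row_def list_matrix_def)

lemma rows_list_matrix:
  fixes xs :: "(real^'n::{finite,linorder}) list"
  assumes "length xs = CARD('n)"
  shows "rows (list_matrix xs) = set xs"
proof -
  have "rows (list_matrix xs) = (\<lambda>k. xs ! k) ` range (rank_idx :: 'n \<Rightarrow> nat)"
    by (auto simp: rows_def row_list_matrix)
  also have "\<dots> = set xs"
    using assms by (auto simp: range_rank_idx in_set_conv_nth)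
  finally show ?thesis .
qed

lemma detl_update_linear:
  fixes xs :: "(real^'n::{finite,linorder}) list"
  assumes "length xs = CARD('n)" "m < CARD('n)"
  shows "detl (xs[m := a *\<^sub>R u + b *\<^sub>R w]) = a * detl (xs[m := u]) + b * detl (xs[m := w])"
proof -
  obtain k :: 'n where k: "rank_idx k = m"
    using assms(2) range_rank_idx by (metis imageE lessThan_iff)
  have upd: "list_matrix (xs[m := v]) = (\<chi> i. if i = k then v else xs ! rank_idx i)" for v
    using assms k by (auto simp: list_matrix_def vec_eq_iff nth_list_update inj_eq[OF inj_rank_idx])
  show ?thesis
    unfolding detl_eq_det_list_matrix upd
    using det_row_add[of k "\<lambda>_. a *s u" "\<lambda>_. b *s w" "\<lambda>i. xs ! rank_idx i"]
      det_row_mul[of k a "\<lambda>_. u" "\<lambda>i. xs ! rank_idx i"] det_row_mul[of k b "\<lambda>_. w" "\<lambda>i. xs ! rank_idx i"]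
    unfolding scalar_mult_eq_scaleR by simp
qed

lemma detl_repeated_entry:
  fixes xs :: "(real^'n::{finite,linorder}) list"
  assumes "length xs = CARD('n)" "i < CARD('n)" "j < CARD('n)" "i \<noteq> j" "xs ! i = xs ! j"
  shows "detl xs = 0"
proof -
  obtain a b :: 'n where "rank_idx a = i" "rank_idx b = j"
    using assms(2,3) range_rank_idx by (metis imageE lessThan_iff)
  with assms have "a \<noteq> b" "row a (list_matrix xs) = row b (list_matrix xs)"
    by (auto simp: row_list_matrix)
  then show ?thesis
    unfolding detl_eq_det_list_matrix by (rule det_identical_rows)
qed

lemma detl_eq_0_if_low_dim:
  fixes xs :: "(real^'n::{finite,linorder}) list"
  assumes "length xs = CARD('n)" "set xs \<subseteq> V" "dim V < CARD('n)"
  shows "detl xs = 0"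
  using dim_subset[OF assms(2)] assms(3)
  by (simp add: detl_eq_det_list_matrix det_eq_0_rank row_rank_def rows_list_matrix[OF assms(1)])

definition orthonormal_list :: "'a::real_inner list \<Rightarrow> bool" where
  "orthonormal_list xs \<longleftrightarrow> (\<forall>i<length xs. \<forall>j<length xs. xs ! i \<bullet> xs ! j = (if i = j then 1 else 0))"

lemma detl_orthonormal_list:
  fixes xs :: "(real^'n::{finite,linorder}) list"
  assumes "length xs = CARD('n)" "orthonormal_list xs"
  shows "\<bar>detl xs\<bar> = 1"
proof -
  have "orthogonal_matrix (list_matrix xs)"
    unfolding orthogonal_matrix_orthonormal_rows
    using assms by (auto simp: orthonormal_list_def row_list_matrix norm_eq_1 orthogonal_def inj_eq[OF inj_rank_idx])
  then show ?thesis
    unfolding detl_eq_det_list_matrix using det_orthogonal_matrix by fastforce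
qed

lemma orthonormal_list_Cons:
  assumes "x \<bullet> x = 1" "\<forall>y\<in>set xs. x \<bullet> y = 0" "orthonormal_list xs"
  shows "orthonormal_list (x # xs)"
  unfolding orthonormal_list_def
proof (intro allI impI)
  fix i j
  assume "i < length (x # xs)" "j < length (x # xs)"
  then show "(x # xs) ! i \<bullet> (x # xs) ! j = (if i = j then 1 else 0)"
    using assms by (cases i; cases j) (auto simp: orthonormal_list_def inner_commute)
qed

lemma onb_list_orthonormal: "onb_list V k es \<Longrightarrow> orthonormal_list es"
  unfolding onb_list_def orthonormal_list_def by auto

lemma orthonormal_list_distinct: "orthonormal_list xs \<Longrightarrow> distinct xs"
  unfolding orthonormal_list_def distinct_conv_nth by (metis zero_neq_one)

lemma detl_map_linear:
  fixes xs :: "(real^'n::{finite,linorder}) list"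
  assumes "linear f" "length xs = CARD('n)"
  shows "detl (map f xs) = det (matrix f) * detl xs"
proof -
  have "f x = matrix f *v x" for x
    using assms(1) by (simp add: matrix_works linear_def scalar_mult_eq_scaleR)
  then have "list_matrix (map f xs) = list_matrix xs ** transpose (matrix f)"
    using assms(2) by (auto simp: vec_eq_iff list_matrix_def matrix_vector_mult_def
        matrix_matrix_mult_def transpose_def mult.commute)
  then show ?thesis
    unfolding detl_eq_det_list_matrix by (simp add: det_mul)
qed

lemma det_eq_prod_diagonal_if_offdiagonal_in_column:
  fixes A :: "'a::comm_ring_1^'n^'n"
  assumes offdiag: "\<And>i j. i \<noteq> j \<Longrightarrow> j \<noteq> l \<Longrightarrow> A $ i $ j = 0"
  shows "det A = (\<Prod>i\<in>UNIV. A $ i $ i)"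
proof -
  have "(\<Prod>i\<in>UNIV. A $ i $ p i) = 0" if p: "p permutes UNIV" "p \<noteq> id" for p
  proof -
    have "\<exists>k. k \<noteq> p k \<and> p k \<noteq> l"
    proof (cases "p l = l")
      case True
      obtain i where "p i \<noteq> i"
        using p(2) by (metis eq_id_iff)
      with True permutes_inj[OF p(1)] show ?thesis
        by (metis injD)
    next
      case False
      then show ?thesis
        by metis
    qed
    then show ?thesis
      using offdiag by (metis UNIV_I finite prod_zero)
  qed
  then have "det A = (\<Sum>p\<in>{id}. of_int (sign p) * (\<Prod>i\<in>UNIV. A $ i $ p i))"
    unfolding det_def by (intro sum.mono_neutral_right) (auto simp: finite_permutations)
  then show ?thesis
    by simp
qed

section \<open>Alternating forms and volume forms\<close>

lemma alt_form_on_outside: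
  "alt_form_on V k \<omega> \<Longrightarrow> \<not> (length vs = k \<and> set vs \<subseteq> V) \<Longrightarrow> \<omega> vs = 0"
  unfolding alt_form_on_def by blast

lemma alt_form_on_linear:
  "alt_form_on V k \<omega> \<Longrightarrow> length vs = k \<Longrightarrow> set vs \<subseteq> V \<Longrightarrow> i < k \<Longrightarrow> u \<in> V \<Longrightarrow> w \<in> V \<Longrightarrow>
   \<omega> (vs[i := a *\<^sub>R u + b *\<^sub>R w]) = a * \<omega> (vs[i := u]) + b * \<omega> (vs[i := w])"
  unfolding alt_form_on_def by blast

lemma alt_form_on_repeated:
  "alt_form_on V k \<omega> \<Longrightarrow> length vs = k \<Longrightarrow> set vs \<subseteq> V \<Longrightarrow> i < k \<Longrightarrow> j < k \<Longrightarrow> i \<noteq> j \<Longrightarrow>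
   vs ! i = vs ! j \<Longrightarrow> \<omega> vs = 0"
  unfolding alt_form_on_def by blast

lemma alt_form_on_sum:
  assumes alt: "alt_form_on V k \<omega>" and V: "subspace V" and vs: "length vs = k" "set vs \<subseteq> V"
    and i: "i < k" and S: "finite S" "S \<subseteq> V"
  shows "\<omega> (vs[i := (\<Sum>e\<in>S. c e *\<^sub>R e)]) = (\<Sum>e\<in>S. c e * \<omega> (vs[i := e]))"
  using S
proof (induction S rule: finite_induct)
  case empty
  have "vs ! i \<in> V"
    using vs i by auto
  then show ?case
    using alt_form_on_linear[OF alt vs i, of "vs ! i" "vs ! i" 0 0] by simp
next
  case (insert x F)
  have "(\<Sum>e\<in>F. c e *\<^sub>R e) \<in> V"
    using insert V by (auto intro: subspace_sum subspace_scale)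
  then show ?case
    using alt_form_on_linear[OF alt vs i, of x "\<Sum>e\<in>F. c e *\<^sub>R e" "c x" 1] insert by simp
qed

lemma alt_form_on_swap:
  assumes alt: "alt_form_on V k \<omega>" and V: "subspace V" and vs: "length vs = k" "set vs \<subseteq> V"
    and ij: "i < k" "j < k" "i \<noteq> j" and uw: "u \<in> V" "w \<in> V"
  shows "\<omega> (vs[i := u, j := w]) = - \<omega> (vs[i := w, j := u])"
proof -
  define B where "B p q = \<omega> (vs[i := p, j := q])" for p q
  have set_upd: "set (vs[i := p, j := q]) \<subseteq> V" if "p \<in> V" "q \<in> V" for p q
    using that vs set_update_subsetI by metis
  have add_left: "B (p + q) x = B p x + B q x" if "p \<in> V" "q \<in> V" "x \<in> V" for p q x
    using alt_form_on_linear[OF alt _ set_update_subsetI[OF vs(2) \<open>x \<in> V\<close>] ij(1) that(1,2),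
        of j 1 1] vs ij
    by (simp add: B_def list_update_swap)
  have add_right: "B x (p + q) = B x p + B x q" if "p \<in> V" "q \<in> V" "x \<in> V" for p q x
    using alt_form_on_linear[OF alt _ set_update_subsetI[OF vs(2) \<open>x \<in> V\<close>] ij(2) that(1,2),
        of i 1 1] vs
    by (simp add: B_def)
  have diag: "B p p = 0" if "p \<in> V" for p
    using alt_form_on_repeated[OF alt _ set_upd[OF that that] ij] vs ij by (simp add: B_def)
  have "u + w \<in> V"
    using V uw by (simp add: subspace_add)
  then have "0 = B (u + w) (u + w)"
    by (simp add: diag)
  also have "\<dots> = B u u + B u w + B w u + B w w"
    using uw V by (simp add: add_left add_right subspace_add)
  finally show ?thesis
    using diag[OF uw(1)] diag[OF uw(2)] by (simp add: B_def)
qed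

text \<open>Induction on the number of positions where \<open>vs\<close> differs from \<open>es\<close>: a transposition
  puts one more entry in place, and a list missing some entry of \<open>es\<close> has a repetition.\<close>

lemma alt_form_on_zero_on_rearrangements:
  assumes alt: "alt_form_on V k \<omega>" and V: "subspace V"
    and es: "length es = k" "set es \<subseteq> V" "distinct es" "\<omega> es = 0"
  shows "length vs = k \<Longrightarrow> set vs \<subseteq> set es \<Longrightarrow> \<omega> vs = 0"
proof (induction "card {i. i < k \<and> vs ! i \<noteq> es ! i}" arbitrary: vs rule: less_induct)
  case less
  have vsV: "set vs \<subseteq> V"
    using less.prems es by blast
  show ?case
  proof (cases "vs = es")
    case True
    with es show ?thesis by simp
  next
    case False
    then obtain i where i: "i < k" "vs ! i \<noteq> es ! i"
      using less.prems es by (metis nth_equalityI)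
    show ?thesis
    proof (cases "es ! i \<in> set vs")
      case False
      with i es have "set vs \<subset> set es"
        using less.prems by (metis nth_mem psubsetI)
      then have "card (set vs) < length vs"
        using psubset_card_mono[of "set es" "set vs"] distinct_card[OF es(3)] es less.prems by simp
      then have "\<not> distinct vs"
        using distinct_card by fastforce
      then obtain p q where "p < k" "q < k" "p \<noteq> q" "vs ! p = vs ! q"
        using less.prems by (auto simp: distinct_conv_nth)
      then show ?thesis
        using alt_form_on_repeated[OF alt less.prems(1) vsV] by blast
    next
      case True
      then obtain j where j: "j < k" "vs ! j = es ! i"
        using less.prems by (metis in_set_conv_nth)
      have "i \<noteq> j" "es ! j \<noteq> es ! i"
        using i j es by (auto simp: nth_eq_iff_index_eq)
      have "vs ! i \<in> V" "vs ! j \<in> V"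
        using vsV less.prems(1) i(1) j(1) by (auto dest: nth_mem)
      define vs' where "vs' = vs[i := vs ! j, j := vs ! i]"
      have "\<omega> vs = \<omega> (vs[i := vs ! i, j := vs ! j])"
        by simp
      also have "\<dots> = - \<omega> vs'"
        unfolding vs'_def using less.prems(1) vsV i(1) j(1) \<open>i \<noteq> j\<close> \<open>vs ! i \<in> V\<close> \<open>vs ! j \<in> V\<close>
        by (rule alt_form_on_swap[OF alt V])
      also have "\<omega> vs' = 0"
      proof (rule less.hyps)
        have "{p. p < k \<and> vs' ! p \<noteq> es ! p} \<subseteq> {p. p < k \<and> vs ! p \<noteq> es ! p} - {i}"
          using i j \<open>es ! j \<noteq> es ! i\<close> less.prems by (auto simp: vs'_def nth_list_update)
        moreover have "i \<in> {p. p < k \<and> vs ! p \<noteq> es ! p}"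
          using i by simp
        ultimately have "{p. p < k \<and> vs' ! p \<noteq> es ! p} \<subset> {p. p < k \<and> vs ! p \<noteq> es ! p}"
          by blast
        then show "card {p. p < k \<and> vs' ! p \<noteq> es ! p} < card {p. p < k \<and> vs ! p \<noteq> es ! p}"
          by (rule psubset_card_mono[rotated]) simp
        have "set vs' = set vs"
          unfolding vs'_def using less.prems i j by (intro set_swap) simp_all
        then show "length vs' = k" "set vs' \<subseteq> set es"
          using less.prems by (simp_all add: vs'_def)
      qed
      finally show ?thesis
        by simp
    qed
  qed
qed

lemma alt_form_on_zero_if_zero_on_basis:
  assumes alt: "alt_form_on V k \<omega>" and V: "subspace V"
    and es: "length es = k" "set es \<subseteq> V" "V \<subseteq> span (set es)" "distinct es" "\<omega> es = 0"
  shows "\<omega> vs = 0"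
proof -
  have zero_if_tail_in_basis: "\<omega> vs = 0"
    if "length vs = k" "set vs \<subseteq> V" "\<forall>i. m \<le> i \<and> i < k \<longrightarrow> vs ! i \<in> set es" for m vs
    using that
  proof (induction m arbitrary: vs)
    case 0
    then have "set vs \<subseteq> set es"
      by (auto simp: in_set_conv_nth)
    with 0 show ?case
      using alt_form_on_zero_on_rearrangements[OF alt V es(1,2,4,5)] by blast
  next
    case (Suc m)
    show ?case
    proof (cases "m < k")
      case False
      show ?thesis
        by (rule Suc.IH) (use False Suc.prems in auto)
    next
      case True
      have "vs ! m \<in> V"
        using Suc.prems(1,2) True by (metis nth_mem subsetD)
      with es(3) have "vs ! m \<in> span (set es)"
        by blast
      then obtain c where c: "vs ! m = (\<Sum>e\<in>set es. c e *\<^sub>R e)"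
        using span_finite[of "set es"] by auto
      have "\<omega> vs = \<omega> (vs[m := (\<Sum>e\<in>set es. c e *\<^sub>R e)])"
        by (metis c list_update_id)
      also have "\<dots> = (\<Sum>e\<in>set es. c e * \<omega> (vs[m := e]))"
        by (rule alt_form_on_sum[OF alt V Suc.prems(1,2) True]) (use es(2) in simp_all)
      also have "\<dots> = 0"
      proof (intro sum.neutral ballI)
        fix e
        assume e: "e \<in> set es"
        with es(2) have "e \<in> V"
          by blast
        with Suc.prems(2) have "set (vs[m := e]) \<subseteq> V"
          by (rule set_update_subsetI)
        have "\<omega> (vs[m := e]) = 0"
          by (rule Suc.IH)
            (use \<open>set (vs[m := e]) \<subseteq> V\<close> e Suc.prems(1,3) in \<open>auto simp: nth_list_update\<close>)
        then show "c e * \<omega> (vs[m := e]) = 0"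
          by simp
      qed
      finally show ?thesis .
    qed
  qed
  show ?thesis
  proof (cases "length vs = k \<and> set vs \<subseteq> V")
    case True
    then show ?thesis
      by (intro zero_if_tail_in_basis[of vs k]) auto
  next
    case False
    then show ?thesis
      using alt_form_on_outside[OF alt] by blast
  qed
qed

lemma volform_eqI:
  assumes V: "subspace V" and alt: "alt_form_on V k \<Omega>"
    and one: "\<And>es. onb_list V k es \<Longrightarrow> posor es \<Longrightarrow> \<Omega> es = 1"
    and ex: "onb_list V k es\<^sub>0" "posor es\<^sub>0"
  shows "volform V k posor = \<Omega>"
  unfolding volform_def
proof (rule the_equality)
  show "alt_form_on V k \<Omega> \<and> (\<forall>es. onb_list V k es \<and> posor es \<longrightarrow> \<Omega> es = 1)"
    using alt one by blast
next
  fix \<omega>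
  assume \<omega>: "alt_form_on V k \<omega> \<and> (\<forall>es. onb_list V k es \<and> posor es \<longrightarrow> \<omega> es = 1)"
  have "alt_form_on V k (\<lambda>vs. \<omega> vs - \<Omega> vs)"
    using \<omega> alt unfolding alt_form_on_def by (simp add: algebra_simps)
  moreover have "distinct es\<^sub>0"
    using ex(1) by (intro orthonormal_list_distinct onb_list_orthonormal)
  moreover have "\<omega> es\<^sub>0 - \<Omega> es\<^sub>0 = 0"
    using ex \<omega> one by simp
  moreover have "length es\<^sub>0 = k" "set es\<^sub>0 \<subseteq> V" "V \<subseteq> span (set es\<^sub>0)"
    using ex(1) unfolding onb_list_def by auto
  ultimately have "\<omega> vs - \<Omega> vs = 0" for vs
    using alt_form_on_zero_if_zero_on_basis[OF _ V] by blast
  then show "\<omega> = \<Omega>"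
    by auto
qed

lemma alt_form_on_detl_append:
  fixes pre :: "(real^'n::{finite,linorder}) list"
  assumes V: "subspace V" and len: "length pre + k = CARD('n)"
  shows "alt_form_on V k (\<lambda>vs. if length vs = k \<and> set vs \<subseteq> V then detl (pre @ vs) / c else 0)"
  unfolding alt_form_on_def
proof (intro conjI allI impI)
  fix vs i a b u w
  assume h: "length vs = k \<and> set vs \<subseteq> V \<and> i < k \<and> u \<in> V \<and> w \<in> V"
  then have "a *\<^sub>R u + b *\<^sub>R w \<in> V"
    using V by (simp add: subspace_add subspace_scale)
  moreover have "set (vs[i := x]) \<subseteq> V" if "x \<in> V" for x
    using h that by (simp add: set_update_subsetI)
  moreover have "detl ((pre @ vs)[length pre + i := a *\<^sub>R u + b *\<^sub>R w])
      = a * detl ((pre @ vs)[length pre + i := u]) + b * detl ((pre @ vs)[length pre + i := w])"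
    using h len by (intro detl_update_linear) auto
  ultimately show "(if length (vs[i := a *\<^sub>R u + b *\<^sub>R w]) = k \<and> set (vs[i := a *\<^sub>R u + b *\<^sub>R w]) \<subseteq> V
         then detl (pre @ vs[i := a *\<^sub>R u + b *\<^sub>R w]) / c else 0) =
        a * (if length (vs[i := u]) = k \<and> set (vs[i := u]) \<subseteq> V then detl (pre @ vs[i := u]) / c else 0) +
        b * (if length (vs[i := w]) = k \<and> set (vs[i := w]) \<subseteq> V then detl (pre @ vs[i := w]) / c else 0)"
    using h by (simp add: list_update_append add_divide_distrib)
next
  fix vs i j
  assume h: "length vs = k \<and> set vs \<subseteq> V \<and> i < k \<and> j < k \<and> i \<noteq> j \<and> vs ! i = vs ! j"
  then have "detl (pre @ vs) = 0"
    using len by (intro detl_repeated_entry[of _ "length pre + i" "length pre + j"]) (auto simp: nth_append)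
  then show "(if length vs = k \<and> set vs \<subseteq> V then detl (pre @ vs) / c else 0) = 0"
    by simp
qed auto

lemma exists_onb_list:
  assumes "subspace V" "dim V = k"
  obtains es where "onb_list V k es"
proof -
  obtain B where B: "B \<subseteq> V" "pairwise orthogonal B" "\<And>x. x \<in> B \<Longrightarrow> norm x = 1"
    "independent B" "card B = dim V" "span B = V"
    using orthonormal_basis_subspace[OF assms(1)] by metis
  obtain es where es: "set es = B" "distinct es"
    using finite_distinct_list[OF finiteI_independent[OF B(4)]] by blast
  have "length es = k"
    using es B(5) assms(2) distinct_card by metis
  moreover have "es ! i \<bullet> es ! j = (if i = j then 1 else 0)" if "i < k" "j < k" for i j
    using that es B(2,3) \<open>length es = k\<close>
    by (auto simp: norm_eq_1 pairwise_def orthogonal_def nth_eq_iff_index_eq)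
  ultimately have "onb_list V k es"
    using es B unfolding onb_list_def by auto
  then show thesis ..
qed

lemma onb_list_negate_first:
  assumes onb: "onb_list V k es" and k: "0 < k" and V: "subspace V"
  shows "onb_list V k (es[0 := - (es ! 0)])"
proof -
  let ?es' = "es[0 := - (es ! 0)]"
  have es: "length es = k" "set es \<subseteq> V" "span (set es) = V"
    "\<forall>i<k. \<forall>j<k. es ! i \<bullet> es ! j = (if i = j then 1 else 0)"
    using onb unfolding onb_list_def by auto
  have "- (es ! 0) \<in> V"
    using es(1,2) k V by (simp add: subspace_neg subsetD)
  then have sub: "set ?es' \<subseteq> V"
    using es(2) by (rule set_update_subsetI[rotated])
  have "es ! i \<in> span (set ?es')" if "i < k" for i
  proof (cases "i = 0")
    case True
    have "- (?es' ! 0) \<in> span (set ?es')"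
      using es(1) k by (intro span_neg span_base) (simp add: set_update_memI)
    with True es(1) k show ?thesis
      by simp
  next
    case False
    with that es(1) show ?thesis
      by (metis length_list_update nth_list_update_neq nth_mem span_base)
  qed
  then have "V \<subseteq> span (set ?es')"
    using es(1,3) by (metis in_set_conv_nth span_minimal subsetI subspace_span)
  moreover have "span (set ?es') \<subseteq> V"
    using sub V by (rule span_minimal)
  moreover have "\<forall>i<k. \<forall>j<k. ?es' ! i \<bullet> ?es' ! j = (if i = j then 1 else 0)"
    using es(1,4) by (auto simp: nth_list_update)
  ultimately show ?thesis
    using sub es(1) unfolding onb_list_def by auto
qed

lemma volform_eq_detl_append:
  fixes pre :: "(real^'n::{finite,linorder}) list"
  assumes V: "subspace V" "dim V = k" "0 < k" and len: "length pre + k = CARD('n)" and c: "0 < c"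
    and onb_detl: "\<And>es. onb_list V k es \<Longrightarrow> \<bar>detl (pre @ es)\<bar> = c"
  shows "volform V k (\<lambda>es. 0 < detl (pre @ es))
    = (\<lambda>vs. if length vs = k \<and> set vs \<subseteq> V then detl (pre @ vs) / c else 0)"
proof -
  obtain es where es: "onb_list V k es"
    using exists_onb_list[OF V(1,2)] .
  have es_V: "length es = k" "set es \<subseteq> V"
    using es unfolding onb_list_def by auto
  have "\<exists>es. onb_list V k es \<and> 0 < detl (pre @ es)"
  proof (cases "0 < detl (pre @ es)")
    case True
    with es show ?thesis by blast
  next
    case False
    have "detl (pre @ es[0 := - (es ! 0)]) = detl ((pre @ es)[length pre := (-1) *\<^sub>R (es ! 0) + 0 *\<^sub>R (es ! 0)])"
      by (simp add: list_update_append)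
    also have "\<dots> = - detl (pre @ es)"
      using es_V len V(3) by (subst detl_update_linear) (auto simp: nth_append list_update_append)
    finally have "0 < detl (pre @ es[0 := - (es ! 0)])"
      using False onb_detl[OF es] c by linarith
    with onb_list_negate_first[OF es V(3,1)] show ?thesis
      by blast
  qed
  then obtain es\<^sub>0 where "onb_list V k es\<^sub>0" "0 < detl (pre @ es\<^sub>0)"
    by blast
  moreover have "(if length es = k \<and> set es \<subseteq> V then detl (pre @ es) / c else 0) = 1"
    if "onb_list V k es" "0 < detl (pre @ es)" for es
    using that onb_detl[OF that(1)] c unfolding onb_list_def by auto
  ultimately show ?thesis
    by (intro volform_eqI[OF V(1) alt_form_on_detl_append[OF V(1) len]])
qed

section \<open>Volume forms of the sphere and of its subspheres\<close>

lemma dim_tan_sphere: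
  fixes \<eta> :: "real^'n::{finite,linorder}"
  assumes "\<eta> \<noteq> 0"
  shows "dim (tan_sphere \<eta>) = CARD('n) - 1"
proof -
  have "tan_sphere \<eta> = {x. \<eta> \<bullet> x = 0}"
    by (auto simp: tan_sphere_def inner_commute)
  then show ?thesis
    using dim_hyperplane[OF assms] by simp
qed

lemma dim_tan_subsph:
  fixes \<eta> \<zeta> :: "real^'n::{finite,linorder}"
  assumes "norm \<eta> = 1" "norm \<zeta> = 1" "\<bar>\<zeta> \<bullet> \<eta>\<bar> < 1"
  shows "dim (tan_subsph \<zeta> \<eta>) = CARD('n) - 2"
proof -
  have "\<eta> \<notin> span {\<zeta>}"
  proof
    assume "\<eta> \<in> span {\<zeta>}"
    then obtain t where "\<eta> = t *\<^sub>R \<zeta>"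
      by (auto simp: span_singleton)
    then have "\<bar>\<zeta> \<bullet> \<eta>\<bar> = norm \<eta>"
      using assms(2) by (simp add: norm_eq_1)
    with assms show False
      by simp
  qed
  moreover have "\<zeta> \<noteq> 0"
    using assms(2) by auto
  ultimately have indep: "independent {\<eta>, \<zeta>}" and "\<eta> \<noteq> \<zeta>"
    by (auto simp: independent_insert span_base)
  have "dim {y \<in> UNIV. \<forall>x \<in> span {\<eta>, \<zeta>}. orthogonal x y} + dim (span {\<eta>, \<zeta>})
      = dim (UNIV :: (real^'n::{finite,linorder}) set)"
    by (rule dim_subspace_orthogonal_to_vectors) auto
  moreover have "{y \<in> UNIV. \<forall>x \<in> span {\<eta>, \<zeta>}. orthogonal x y} = tan_subsph \<zeta> \<eta>"
    by (auto simp: tan_subsph_def orthogonal_def inner_commute span_base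
        intro: orthogonal_to_span[unfolded orthogonal_def])
  moreover have "dim (span {\<eta>, \<zeta>}) = 2"
    using dim_span_eq_card_independent[OF indep] \<open>\<eta> \<noteq> \<zeta>\<close> by simp
  ultimately show ?thesis
    by simp
qed

lemma subspace_tan_sphere: "subspace (tan_sphere \<eta>)"
  by (auto simp: subspace_def tan_sphere_def inner_add_left)

lemma subspace_tan_subsph: "subspace (tan_subsph \<zeta> \<eta>)"
  by (auto simp: subspace_def tan_subsph_def inner_add_left)

lemma dSphere_eq:
  fixes \<eta> :: "real^'n::{finite,linorder}"
  assumes "norm \<eta> = 1" "2 \<le> CARD('n)"
  shows "dSphere \<eta> vs
    = (if length vs = CARD('n) - 1 \<and> set vs \<subseteq> tan_sphere \<eta> then detl (\<eta> # vs) else 0)"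
proof -
  have onb_detl: "\<bar>detl ([\<eta>] @ es)\<bar> = 1" if "onb_list (tan_sphere \<eta>) (CARD('n) - 1) es" for es
  proof (rule detl_orthonormal_list)
    show "length ([\<eta>] @ es) = CARD('n)"
      using that assms(2) by (simp add: onb_list_def)
    show "orthonormal_list ([\<eta>] @ es)"
      using that assms(1) onb_list_orthonormal[OF that]
      by (auto simp: onb_list_def tan_sphere_def norm_eq_1 inner_commute intro!: orthonormal_list_Cons)
  qed
  have "volform (tan_sphere \<eta>) (CARD('n) - 1) (\<lambda>es. 0 < detl ([\<eta>] @ es))
      = (\<lambda>vs. if length vs = CARD('n) - 1 \<and> set vs \<subseteq> tan_sphere \<eta> then detl ([\<eta>] @ vs) / 1 else 0)"
  proof (rule volform_eq_detl_append)
    show "subspace (tan_sphere \<eta>)"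
      by (rule subspace_tan_sphere)
    show "dim (tan_sphere \<eta>) = CARD('n) - 1"
      using assms(1) by (intro dim_tan_sphere) auto
  qed (use assms(2) onb_detl in auto)
  then show ?thesis
    unfolding dSphere_def by simp
qed

lemma dSub_eq:
  fixes \<eta> \<zeta> :: "real^'n::{finite,linorder}"
  assumes unit: "norm \<eta> = 1" "norm \<zeta> = 1" and c: "\<bar>\<zeta> \<bullet> \<eta>\<bar> < 1" and n: "3 \<le> CARD('n)"
  shows "dSub \<zeta> \<eta> vs = (if length vs = CARD('n) - 2 \<and> set vs \<subseteq> tan_subsph \<zeta> \<eta>
    then detl (\<eta> # \<zeta> # vs) / sqrt (1 - (\<zeta> \<bullet> \<eta>)\<^sup>2) else 0)"
proof -
  define \<rho> where "\<rho> = sqrt (1 - (\<zeta> \<bullet> \<eta>)\<^sup>2)"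
  have "0 < \<rho>" "\<rho>\<^sup>2 = 1 - (\<zeta> \<bullet> \<eta>)\<^sup>2"
    using c by (simp_all add: \<rho>_def abs_square_less_1 less_imp_le)
  define \<zeta>' where "\<zeta>' = (1 / \<rho>) *\<^sub>R (\<zeta> - (\<zeta> \<bullet> \<eta>) *\<^sub>R \<eta>)"
  have \<zeta>_decomp: "\<zeta> = (\<zeta> \<bullet> \<eta>) *\<^sub>R \<eta> + \<rho> *\<^sub>R \<zeta>'"
    using \<open>0 < \<rho>\<close> by (simp add: \<zeta>'_def)
  have "\<eta> \<bullet> \<zeta>' = 0"
    using unit by (simp add: \<zeta>'_def inner_diff_right norm_eq_1 inner_commute)
  have "\<zeta>' \<bullet> \<zeta>' = 1"
  proof -
    have "(\<zeta> - (\<zeta> \<bullet> \<eta>) *\<^sub>R \<eta>) \<bullet> (\<zeta> - (\<zeta> \<bullet> \<eta>) *\<^sub>R \<eta>) = 1 - (\<zeta> \<bullet> \<eta>)\<^sup>2"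
      using unit by (simp add: inner_diff_left inner_diff_right norm_eq_1 inner_commute power2_eq_square)
    also have "\<dots> = \<rho>\<^sup>2"
      using \<open>\<rho>\<^sup>2 = 1 - (\<zeta> \<bullet> \<eta>)\<^sup>2\<close> by simp
    finally have "(\<zeta> - (\<zeta> \<bullet> \<eta>) *\<^sub>R \<eta>) \<bullet> (\<zeta> - (\<zeta> \<bullet> \<eta>) *\<^sub>R \<eta>) = \<rho>\<^sup>2" .
    then show ?thesis
      using \<open>0 < \<rho>\<close> by (simp add: \<zeta>'_def power2_eq_square)
  qed
  have "\<bar>detl ([\<eta>, \<zeta>] @ es)\<bar> = \<rho>" if es: "onb_list (tan_subsph \<zeta> \<eta>) (CARD('n) - 2) es" for es
  proof -
    have len: "length (\<eta> # \<zeta>' # es) = CARD('n)"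
      using es n by (simp add: onb_list_def)
    have "\<forall>y\<in>set es. \<zeta>' \<bullet> y = 0 \<and> \<eta> \<bullet> y = 0"
      using es unfolding onb_list_def tan_subsph_def
      by (auto simp: \<zeta>'_def inner_diff_left inner_diff_right inner_commute)
    then have "orthonormal_list (\<eta> # \<zeta>' # es)"
      using unit \<open>\<eta> \<bullet> \<zeta>' = 0\<close> \<open>\<zeta>' \<bullet> \<zeta>' = 1\<close> onb_list_orthonormal[OF es]
      by (auto simp: norm_eq_1 intro!: orthonormal_list_Cons)
    then have "\<bar>detl (\<eta> # \<zeta>' # es)\<bar> = 1"
      by (rule detl_orthonormal_list[OF len])
    moreover have "detl ((\<eta> # \<zeta>' # es)[1 := (\<zeta> \<bullet> \<eta>) *\<^sub>R \<eta> + \<rho> *\<^sub>R \<zeta>'])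
        = (\<zeta> \<bullet> \<eta>) * detl (\<eta> # \<eta> # es) + \<rho> * detl (\<eta> # \<zeta>' # es)"
      using len n by (subst detl_update_linear) auto
    moreover have "detl (\<eta> # \<eta> # es) = 0"
      using len n by (intro detl_repeated_entry[of _ 0 1]) auto
    ultimately show ?thesis
      using \<open>0 < \<rho>\<close> by (simp flip: \<zeta>_decomp add: abs_mult)
  qed
  then have "volform (tan_subsph \<zeta> \<eta>) (CARD('n) - 2) (\<lambda>es. 0 < detl ([\<eta>, \<zeta>] @ es))
      = (\<lambda>vs. if length vs = CARD('n) - 2 \<and> set vs \<subseteq> tan_subsph \<zeta> \<eta> then detl ([\<eta>, \<zeta>] @ vs) / \<rho> else 0)"
    using n \<open>0 < \<rho>\<close> dim_tan_subsph[OF unit c] subspace_tan_subsph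
    by (intro volform_eq_detl_append) auto
  then show ?thesis
    unfolding dSub_def \<rho>_def by simp
qed

section \<open>Expansion along normal vectors\<close>

lemma detl_swap_first:
  fixes xs :: "(real^'n::{finite,linorder}) list"
  assumes "length xs + 2 = CARD('n)"
  shows "detl (q # p # xs) = - detl (p # q # xs)"
  using alt_form_on_swap[OF alt_form_on_detl_append[of UNIV "[]", where c = 1] subspace_UNIV,
      where vs = "p # p # xs" and i = 0 and j = 1 and u = p and w = q] assms
  by simp

lemma detl_update_decompose:
  fixes xs :: "(real^'n::{finite,linorder}) list"
  assumes "length xs = CARD('n)" "m < CARD('n)" "detl (xs[m := x - a *\<^sub>R p - b *\<^sub>R q]) = 0"
  shows "detl (xs[m := x]) = a * detl (xs[m := p]) + b * detl (xs[m := q])"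
proof -
  have "x = a *\<^sub>R p + 1 *\<^sub>R (b *\<^sub>R q + 1 *\<^sub>R (x - a *\<^sub>R p - b *\<^sub>R q))"
    by simp
  then show ?thesis
    using assms by (metis detl_update_linear mult_1 add_0_right)
qed

lemma detl_Cons_tan_sphere:
  fixes \<eta> :: "real^'n::{finite,linorder}"
  assumes "norm \<eta> = 1" "length vs = CARD('n) - 1" "set vs \<subseteq> tan_sphere \<eta>"
  shows "detl (u # vs) = (u \<bullet> \<eta>) * detl (\<eta> # vs)"
proof -
  have len: "length (\<eta> # vs) = CARD('n)"
    using assms(2) by simp
  have dim: "dim (tan_sphere \<eta>) < CARD('n)"
    using assms(1) dim_tan_sphere[of \<eta>] by fastforce
  have "u - (u \<bullet> \<eta>) *\<^sub>R \<eta> - 0 *\<^sub>R \<eta> \<in> tan_sphere \<eta>"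
    using assms(1) by (simp add: tan_sphere_def inner_diff_left norm_eq_1)
  then have "detl ((\<eta> # vs)[0 := u - (u \<bullet> \<eta>) *\<^sub>R \<eta> - 0 *\<^sub>R \<eta>]) = 0"
    using assms len dim by (intro detl_eq_0_if_low_dim[where V = "tan_sphere \<eta>"]) auto
  from detl_update_decompose[OF len _ this] show ?thesis
    by simp
qed

lemma gram_projection_residual_in_tan_subsph:
  fixes \<eta> \<zeta> :: "real^'n::{finite,linorder}"
  assumes "norm \<eta> = 1" "norm \<zeta> = 1" "\<bar>\<zeta> \<bullet> \<eta>\<bar> < 1"
  shows "x - ((x \<bullet> \<eta> - (\<zeta> \<bullet> \<eta>) * (x \<bullet> \<zeta>)) / (1 - (\<zeta> \<bullet> \<eta>)\<^sup>2)) *\<^sub>R \<eta>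
      - ((x \<bullet> \<zeta> - (\<zeta> \<bullet> \<eta>) * (x \<bullet> \<eta>)) / (1 - (\<zeta> \<bullet> \<eta>)\<^sup>2)) *\<^sub>R \<zeta> \<in> tan_subsph \<zeta> \<eta>"
proof -
  define G where "G = 1 - (\<zeta> \<bullet> \<eta>)\<^sup>2"
  have "0 < G"
    using assms(3) by (simp add: G_def abs_square_less_1)
  let ?a = "(x \<bullet> \<eta> - (\<zeta> \<bullet> \<eta>) * (x \<bullet> \<zeta>)) / G" and ?b = "(x \<bullet> \<zeta> - (\<zeta> \<bullet> \<eta>) * (x \<bullet> \<eta>)) / G"
  have "(x - ?a *\<^sub>R \<eta> - ?b *\<^sub>R \<zeta>) \<bullet> \<eta> = ((x \<bullet> \<eta>) * G - (x \<bullet> \<eta> - (\<zeta> \<bullet> \<eta>) * (x \<bullet> \<zeta>))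
      - (x \<bullet> \<zeta> - (\<zeta> \<bullet> \<eta>) * (x \<bullet> \<eta>)) * (\<zeta> \<bullet> \<eta>)) / G"
    using \<open>0 < G\<close> assms
    by (simp add: inner_diff_left inner_add_left field_simps norm_eq_1 inner_commute[of \<eta> \<zeta>])
  moreover have "(x - ?a *\<^sub>R \<eta> - ?b *\<^sub>R \<zeta>) \<bullet> \<zeta> = ((x \<bullet> \<zeta>) * G - (x \<bullet> \<eta> - (\<zeta> \<bullet> \<eta>) * (x \<bullet> \<zeta>)) * (\<zeta> \<bullet> \<eta>)
      - (x \<bullet> \<zeta> - (\<zeta> \<bullet> \<eta>) * (x \<bullet> \<eta>))) / G"
    using \<open>0 < G\<close> assms
    by (simp add: inner_diff_left inner_add_left field_simps norm_eq_1 inner_commute[of \<eta> \<zeta>])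
  ultimately show ?thesis
    by (simp add: tan_subsph_def G_def algebra_simps power2_eq_square)
qed

lemma detl_Cons_Cons_eq_0:
  fixes \<eta> \<zeta> :: "real^'n::{finite,linorder}"
  assumes unit: "norm \<eta> = 1" "norm \<zeta> = 1" and c: "\<bar>\<zeta> \<bullet> \<eta>\<bar> < 1" and n: "2 \<le> CARD('n)"
    and vs: "length vs = CARD('n) - 2" "set vs \<subseteq> tan_subsph \<zeta> \<eta>"
    and pq: "p \<in> tan_subsph \<zeta> \<eta> \<or> q \<in> tan_subsph \<zeta> \<eta>"
  shows "detl (p # q # vs) = 0"
proof -
  obtain r where "set (p # q # vs) \<subseteq> insert r (tan_subsph \<zeta> \<eta>)"
    using pq vs(2) by auto
  moreover have "dim (insert r (tan_subsph \<zeta> \<eta>)) < CARD('n)"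
    using dim_tan_subsph[OF unit c] n by (auto simp: dim_insert)
  ultimately show ?thesis
    using vs(1) n by (intro detl_eq_0_if_low_dim) auto
qed

text \<open>The coefficients \<open>a x\<close>, \<open>b x\<close> below are those of the orthogonal projection of \<open>x\<close>
  onto \<open>span {\<eta>, \<zeta>}\<close> in the basis \<open>\<eta>, \<zeta>\<close>; the Gram determinant \<open>1 - (\<zeta> \<bullet> \<eta>)\<^sup>2\<close>
  accounts for \<open>\<eta>\<close> and \<open>\<zeta>\<close> not being orthogonal.\<close>

lemma detl_Cons_Cons_tan_subsph:
  fixes \<eta> \<zeta> :: "real^'n::{finite,linorder}"
  assumes unit: "norm \<eta> = 1" "norm \<zeta> = 1" and c: "\<bar>\<zeta> \<bullet> \<eta>\<bar> < 1" and n: "2 \<le> CARD('n)"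
    and vs: "length vs = CARD('n) - 2" "set vs \<subseteq> tan_subsph \<zeta> \<eta>"
  shows "detl (y # w # vs) * (1 - (\<zeta> \<bullet> \<eta>)\<^sup>2)
    = ((y \<bullet> \<eta>) * (w \<bullet> \<zeta>) - (y \<bullet> \<zeta>) * (w \<bullet> \<eta>)) * detl (\<eta> # \<zeta> # vs)"
proof -
  define G where "G = 1 - (\<zeta> \<bullet> \<eta>)\<^sup>2"
  have "0 < G"
    using c by (simp add: G_def abs_square_less_1)
  define a where "a x = (x \<bullet> \<eta> - (\<zeta> \<bullet> \<eta>) * (x \<bullet> \<zeta>)) / G" for x
  define b where "b x = (x \<bullet> \<zeta> - (\<zeta> \<bullet> \<eta>) * (x \<bullet> \<eta>)) / G" for x
  have residual: "x - a x *\<^sub>R \<eta> - b x *\<^sub>R \<zeta> \<in> tan_subsph \<zeta> \<eta>" for x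
    unfolding a_def b_def G_def by (rule gram_projection_residual_in_tan_subsph[OF unit c])
  have len: "length (p # q # vs) = CARD('n)" for p q
    using vs(1) n by simp
  have slot0: "detl (x # p # vs) = a x * detl (\<eta> # p # vs) + b x * detl (\<zeta> # p # vs)" for x p
  proof -
    have "detl ((x # p # vs)[0 := x - a x *\<^sub>R \<eta> - b x *\<^sub>R \<zeta>]) = 0"
      using detl_Cons_Cons_eq_0[OF unit c n vs] residual by simp
    from detl_update_decompose[OF len _ this] show ?thesis
      by simp
  qed
  have slot1: "detl (p # x # vs) = a x * detl (p # \<eta> # vs) + b x * detl (p # \<zeta> # vs)" for x p
  proof -
    have "detl ((p # x # vs)[1 := x - a x *\<^sub>R \<eta> - b x *\<^sub>R \<zeta>]) = 0"
      using detl_Cons_Cons_eq_0[OF unit c n vs] residual by simp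
    from detl_update_decompose[OF len _ this] n show ?thesis
      by simp
  qed
  have rep: "detl (p # p # vs) = 0" for p
    using len n by (intro detl_repeated_entry[of _ 0 1]) auto
  have swap: "detl (\<zeta> # \<eta> # vs) = - detl (\<eta> # \<zeta> # vs)"
    using vs(1) n by (intro detl_swap_first) simp
  have "detl (y # w # vs) = (a y * b w - b y * a w) * detl (\<eta> # \<zeta> # vs)"
    unfolding slot0[of y w] slot1[of \<eta> w] slot1[of \<zeta> w] rep swap by (simp add: algebra_simps)
  moreover have "(a y * b w - b y * a w) * G = (y \<bullet> \<eta>) * (w \<bullet> \<zeta>) - (y \<bullet> \<zeta>) * (w \<bullet> \<eta>)"
  proof -
    let ?N = "(y \<bullet> \<eta> - (\<zeta> \<bullet> \<eta>) * (y \<bullet> \<zeta>)) * (w \<bullet> \<zeta> - (\<zeta> \<bullet> \<eta>) * (w \<bullet> \<eta>))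
        - (y \<bullet> \<zeta> - (\<zeta> \<bullet> \<eta>) * (y \<bullet> \<eta>)) * (w \<bullet> \<eta> - (\<zeta> \<bullet> \<eta>) * (w \<bullet> \<zeta>))"
    have "(a y * b w - b y * a w) * G = ?N / G"
      unfolding a_def b_def using \<open>0 < G\<close> by (simp add: field_simps power2_eq_square)
    also have "?N = G * ((y \<bullet> \<eta>) * (w \<bullet> \<zeta>) - (y \<bullet> \<zeta>) * (w \<bullet> \<eta>))"
      unfolding G_def by (simp add: algebra_simps power2_eq_square)
    finally show ?thesis
      using \<open>0 < G\<close> by simp
  qed
  ultimately show ?thesis
    by (simp flip: G_def)
qed

section \<open>The map \<open>h\<^sub>z\<close> and its differential\<close>

definition unit_last :: "real^'n::{finite,linorder}" where
  "unit_last = axis lastidx 1"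

definition horiz :: "real^'n::{finite,linorder} \<Rightarrow> real^'n::{finite,linorder}" where
  "horiz x = x - lastc x *\<^sub>R unit_last"

definition hz_factor :: "real \<Rightarrow> real^'n::{finite,linorder} \<Rightarrow> real" where
  "hz_factor z \<eta> = sqrt (1 - z\<^sup>2) / (1 + z * lastc \<eta>)"

definition hz_differential :: "real \<Rightarrow> real^'n::{finite,linorder} \<Rightarrow> real^'n::{finite,linorder} \<Rightarrow> real^'n::{finite,linorder}" where
  "hz_differential z \<eta> v = hz_factor z \<eta> *\<^sub>R horiz v
     - (sqrt (1 - z\<^sup>2) * z * lastc v / (1 + z * lastc \<eta>)\<^sup>2) *\<^sub>R horiz \<eta>
     + ((1 - z\<^sup>2) * lastc v / (1 + z * lastc \<eta>)\<^sup>2) *\<^sub>R unit_last"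

lemma inner_unit_last [simp]: "x \<bullet> unit_last = lastc x" "unit_last \<bullet> x = lastc x"
  by (simp_all add: unit_last_def lastc_def inner_axis inner_commute)

lemma lastc_unit_last [simp]: "lastc unit_last = 1"
  by (simp add: unit_last_def lastc_def)

lemma lastc_linear [simp]:
  "lastc (x + y) = lastc x + lastc y" "lastc (x - y) = lastc x - lastc y" "lastc (a *\<^sub>R x) = a * lastc x"
  by (simp_all add: lastc_def)

lemma lastc_horiz [simp]: "lastc (horiz x) = 0"
  by (simp add: horiz_def)

lemma inner_horiz: "horiz x \<bullet> y = x \<bullet> y - lastc x * lastc y" "y \<bullet> horiz x = x \<bullet> y - lastc x * lastc y"
  by (simp_all add: horiz_def inner_diff_left inner_diff_right inner_commute)

lemma unit_last_nth: "unit_last $ i = (if i = lastidx then 1 else 0)"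
  by (simp add: unit_last_def axis_def)

lemma horiz_nth: "horiz x $ i = (if i = lastidx then 0 else x $ i)"
  by (simp add: horiz_def unit_last_nth lastc_def)

lemma bounded_linear_lastc: "bounded_linear lastc"
  unfolding lastc_def[abs_def] by (rule bounded_linear_vec_nth)

lemma bounded_linear_horiz: "bounded_linear horiz"
  unfolding horiz_def[abs_def]
  by (intro bounded_linear_sub bounded_linear_ident
      bounded_linear_compose[OF bounded_linear_scaleR_left bounded_linear_lastc])

lemma abs_lastc_le: "norm x = 1 \<Longrightarrow> \<bar>lastc x\<bar> \<le> 1"
  using component_le_norm_cart[of x lastidx] by (simp add: lastc_def)

lemma hz_denominator_pos:
  assumes "norm \<eta> = 1" "\<bar>z\<bar> < 1"
  shows "0 < 1 + z * lastc \<eta>"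
proof -
  have "\<bar>z\<bar> * \<bar>lastc \<eta>\<bar> \<le> \<bar>z\<bar>"
    using abs_lastc_le[OF assms(1)] by (simp add: mult_left_le)
  moreover have "- (z * lastc \<eta>) \<le> \<bar>z\<bar> * \<bar>lastc \<eta>\<bar>"
    by (metis abs_ge_minus_self abs_mult)
  ultimately show ?thesis
    using assms(2) by linarith
qed

lemma hz_factor_pos: "norm \<eta> = 1 \<Longrightarrow> \<bar>z\<bar> < 1 \<Longrightarrow> 0 < hz_factor z \<eta>"
  using hz_denominator_pos[of \<eta> z] by (simp add: hz_factor_def abs_square_less_1)

lemma hz_eq:
  "hz z \<eta> = hz_factor z \<eta> *\<^sub>R horiz \<eta> + ((z + lastc \<eta>) / (1 + z * lastc \<eta>)) *\<^sub>R unit_last"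
  by (auto simp: hz_def hz_factor_def horiz_def unit_last_def lastc_def vec_eq_iff axis_def)

lemma gz_eq:
  "gz z \<xi> = (1 / sqrt (1 - z\<^sup>2 * (lastc \<xi>)\<^sup>2)) *\<^sub>R (horiz \<xi> + (sqrt (1 - z\<^sup>2) * lastc \<xi>) *\<^sub>R unit_last)"
  by (auto simp: gz_def horiz_def unit_last_def lastc_def vec_eq_iff axis_def)

lemma inner_horiz_unit_last:
  "(a *\<^sub>R horiz p + b *\<^sub>R unit_last) \<bullet> (c *\<^sub>R horiz q + d *\<^sub>R unit_last)
    = a * c * (p \<bullet> q - lastc p * lastc q) + b * d"
  by (simp add: inner_horiz algebra_simps)

lemma sqrt_one_minus_sq: "\<bar>z\<bar> < 1 \<Longrightarrow> (sqrt (1 - z\<^sup>2))\<^sup>2 = 1 - z\<^sup>2"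
  by (simp add: abs_square_less_1 less_imp_le)

lemma norm_hz:
  assumes \<eta>: "norm \<eta> = 1" and z: "\<bar>z\<bar> < 1"
  shows "norm (hz z \<eta>) = 1"
proof -
  define t s D where "t = lastc \<eta>" and "s = sqrt (1 - z\<^sup>2)" and "D = 1 + z * t"
  have "0 < D"
    using hz_denominator_pos[OF \<eta> z] by (simp add: D_def t_def)
  have "hz z \<eta> \<bullet> hz z \<eta> = (s / D)\<^sup>2 * (1 - t\<^sup>2) + ((z + t) / D)\<^sup>2"
    using \<eta> unfolding hz_eq hz_factor_def inner_horiz_unit_last
    by (simp add: norm_eq_1 s_def t_def D_def power2_eq_square)
  also have "\<dots> = (s\<^sup>2 * (1 - t\<^sup>2) + (z + t)\<^sup>2) / D\<^sup>2"
    using \<open>0 < D\<close> by (simp add: field_simps)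
  also have "s\<^sup>2 * (1 - t\<^sup>2) + (z + t)\<^sup>2 = D\<^sup>2"
    using sqrt_one_minus_sq[OF z] by (simp add: s_def D_def power2_eq_square algebra_simps)
  finally show ?thesis
    using \<open>0 < D\<close> by (simp add: norm_eq_1)
qed

lemma sq_mult_sq_lastc_less_1:
  assumes "norm \<xi> = 1" "\<bar>z\<bar> < 1"
  shows "z\<^sup>2 * (lastc \<xi>)\<^sup>2 < 1"
proof -
  have "\<bar>z\<bar> * \<bar>lastc \<xi>\<bar> \<le> \<bar>z\<bar>"
    using abs_lastc_le[OF assms(1)] by (simp add: mult_left_le)
  with assms(2) have "\<bar>z * lastc \<xi>\<bar> < 1"
    by (simp add: abs_mult)
  then show ?thesis
    by (simp flip: power_mult_distrib add: abs_square_less_1)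
qed

lemma norm_gz:
  assumes \<xi>: "norm \<xi> = 1" and z: "\<bar>z\<bar> < 1"
  shows "norm (gz z \<xi>) = 1"
proof -
  define x s r where "x = lastc \<xi>" and "s = sqrt (1 - z\<^sup>2)" and "r = sqrt (1 - z\<^sup>2 * x\<^sup>2)"
  have "0 < r" "r\<^sup>2 = 1 - z\<^sup>2 * x\<^sup>2"
    using sq_mult_sq_lastc_less_1[OF \<xi> z] by (simp_all add: r_def x_def)
  have gz: "gz z \<xi> = (1 / r) *\<^sub>R horiz \<xi> + (s * x / r) *\<^sub>R unit_last"
    by (simp add: gz_eq r_def s_def x_def scaleR_add_right)
  have "gz z \<xi> \<bullet> gz z \<xi> = (1 / r)\<^sup>2 * (1 - x\<^sup>2) + (s * x / r)\<^sup>2"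
    using \<xi> unfolding gz inner_horiz_unit_last by (simp add: norm_eq_1 x_def power2_eq_square)
  also have "\<dots> = ((1 - x\<^sup>2) + s\<^sup>2 * x\<^sup>2) / r\<^sup>2"
    using \<open>0 < r\<close> by (simp add: field_simps)
  also have "(1 - x\<^sup>2) + s\<^sup>2 * x\<^sup>2 = r\<^sup>2"
    unfolding s_def sqrt_one_minus_sq[OF z] \<open>r\<^sup>2 = 1 - z\<^sup>2 * x\<^sup>2\<close> by (simp add: algebra_simps)
  finally show ?thesis
    using \<open>0 < r\<close> by (simp add: norm_eq_1)
qed

lemma inner_gz:
  "gz z \<xi> \<bullet> v = (\<xi> \<bullet> v - lastc \<xi> * lastc v + sqrt (1 - z\<^sup>2) * lastc \<xi> * lastc v)
    / sqrt (1 - z\<^sup>2 * (lastc \<xi>)\<^sup>2)"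
  by (simp add: gz_eq inner_add_left inner_horiz add_divide_distrib diff_divide_distrib)

lemma xi_inner_hz:
  assumes \<xi>: "norm \<xi> = 1" and \<eta>: "norm \<eta> = 1" and z: "\<bar>z\<bar> < 1" and perp: "gz z \<xi> \<bullet> \<eta> = 0"
  shows "\<xi> \<bullet> hz z \<eta> = z * lastc \<xi>"
proof -
  define t x k s D where "t = lastc \<eta>" and "x = lastc \<xi>" and "k = \<eta> \<bullet> \<xi>" and "s = sqrt (1 - z\<^sup>2)"
    and "D = 1 + z * t"
  have "0 < D"
    using hz_denominator_pos[OF \<eta> z] by (simp add: D_def t_def)
  have "0 < 1 - z\<^sup>2 * x\<^sup>2"
    using sq_mult_sq_lastc_less_1[OF \<xi> z] by (simp add: x_def)
  then have k: "k - x * t + s * x * t = 0"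
    using perp by (simp add: inner_gz inner_commute[of \<xi>] flip: k_def x_def t_def s_def)
  have "\<xi> \<bullet> hz z \<eta> = (s * (k - x * t) + (z + t) * x) / D"
    by (simp add: hz_eq hz_factor_def inner_add_right inner_horiz flip: k_def x_def t_def s_def D_def)
      (use \<open>0 < D\<close> in \<open>simp add: field_simps\<close>)
  also have "s * (k - x * t) + (z + t) * x = z * x * D"
    using k sqrt_one_minus_sq[OF z] unfolding D_def s_def by algebra
  finally show ?thesis
    using \<open>0 < D\<close> by (simp add: x_def)
qed

lemma hz_differential_inner_hz:
  assumes \<eta>: "norm \<eta> = 1" and z: "\<bar>z\<bar> < 1"
  shows "hz_differential z \<eta> v \<bullet> hz z \<eta> = (hz_factor z \<eta>)\<^sup>2 * (v \<bullet> \<eta>)"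
proof -
  define t u s D where "t = lastc \<eta>" and "u = lastc v" and "s = sqrt (1 - z\<^sup>2)" and "D = 1 + z * t"
  have "0 < D"
    using hz_denominator_pos[OF \<eta> z] by (simp add: D_def t_def)
  have "hz_differential z \<eta> v \<bullet> hz z \<eta> = (s / D) * (s / D) * (v \<bullet> \<eta> - u * t)
      - (s * z * u / D\<^sup>2) * (s / D) * (1 - t * t) + ((1 - z\<^sup>2) * u / D\<^sup>2) * ((z + t) / D)"
    using \<eta> by (simp add: hz_differential_def hz_eq hz_factor_def inner_add_left inner_diff_left inner_add_right
        inner_diff_right inner_horiz norm_eq_1 flip: t_def u_def s_def D_def)
      (use \<open>0 < D\<close> in \<open>simp add: field_simps\<close>)
  also have "\<dots> = (s * s * D * (v \<bullet> \<eta> - u * t) - s * s * z * u * (1 - t * t) + (1 - z\<^sup>2) * u * (z + t)) / D ^ 3"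
    using \<open>0 < D\<close> by (simp add: field_simps power2_eq_square power3_eq_cube)
  also have "s * s * D * (v \<bullet> \<eta> - u * t) - s * s * z * u * (1 - t * t) + (1 - z\<^sup>2) * u * (z + t)
      = s * s * D * (v \<bullet> \<eta>)"
    using sqrt_one_minus_sq[OF z] unfolding D_def s_def by (simp add: algebra_simps power2_eq_square)
  also have "s * s * D * (v \<bullet> \<eta>) / D ^ 3 = (s / D)\<^sup>2 * (v \<bullet> \<eta>)"
    using \<open>0 < D\<close> by (simp add: field_simps power2_eq_square power3_eq_cube)
  finally show ?thesis
    by (simp add: hz_factor_def s_def D_def t_def)
qed

lemma hz_differential_inner_xi:
  assumes \<xi>: "norm \<xi> = 1" and \<eta>: "norm \<eta> = 1" and z: "\<bar>z\<bar> < 1" and perp: "gz z \<xi> \<bullet> \<eta> = 0"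
  shows "hz_differential z \<eta> v \<bullet> \<xi> = hz_factor z \<eta> * sqrt (1 - z\<^sup>2 * (lastc \<xi>)\<^sup>2) * (v \<bullet> gz z \<xi>)"
proof -
  define t x u m k s D r where "t = lastc \<eta>" and "x = lastc \<xi>" and "u = lastc v" and "m = v \<bullet> \<xi>"
    and "k = \<eta> \<bullet> \<xi>" and "s = sqrt (1 - z\<^sup>2)" and "D = 1 + z * t" and "r = sqrt (1 - z\<^sup>2 * x\<^sup>2)"
  have "0 < D"
    using hz_denominator_pos[OF \<eta> z] by (simp add: D_def t_def)
  have "0 < r"
    using sq_mult_sq_lastc_less_1[OF \<xi> z] by (simp add: r_def x_def)
  have k: "k - x * t + s * x * t = 0"
    using perp \<open>0 < r\<close> by (simp add: inner_gz inner_commute[of \<xi>] flip: k_def x_def t_def s_def r_def)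
  have "\<xi> \<bullet> v = m"
    by (simp add: m_def inner_commute)
  then have "v \<bullet> gz z \<xi> = (m - x * u + s * x * u) / r"
    by (simp add: inner_commute[of v "gz z \<xi>"] inner_gz flip: x_def u_def s_def r_def)
  moreover have "hz_differential z \<eta> v \<bullet> \<xi> = (s / D) * (m - u * x) - (s * z * u / D\<^sup>2) * (k - t * x) + ((1 - z\<^sup>2) * u / D\<^sup>2) * x"
    by (simp add: hz_differential_def hz_factor_def inner_add_left inner_diff_left inner_horiz
        flip: t_def x_def u_def m_def k_def s_def D_def)
  moreover have "(s / D) * (m - u * x) - (s * z * u / D\<^sup>2) * (k - t * x) + ((1 - z\<^sup>2) * u / D\<^sup>2) * x
      = (s / D) * (m - x * u + s * x * u)"
  proof -
    have "s * s = 1 - z\<^sup>2"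
      using sqrt_one_minus_sq[OF z] by (simp add: s_def power2_eq_square)
    then have num: "s * D * (m - u * x) - s * z * u * (k - t * x) + (1 - z\<^sup>2) * u * x
        = s * D * (m - x * u + s * x * u)"
      using k unfolding D_def by algebra
    have "(s / D) * (m - u * x) - (s * z * u / D\<^sup>2) * (k - t * x) + ((1 - z\<^sup>2) * u / D\<^sup>2) * x
        = (s * D * (m - u * x) - s * z * u * (k - t * x) + (1 - z\<^sup>2) * u * x) / D\<^sup>2"
      using \<open>0 < D\<close> by (simp add: field_simps power2_eq_square)
    also have "\<dots> = (s / D) * (m - x * u + s * x * u)"
      unfolding num using \<open>0 < D\<close> by (simp add: power2_eq_square)
    finally show ?thesis .
  qed
  ultimately show ?thesis
    using \<open>0 < r\<close> by (simp add: hz_factor_def flip: s_def t_def D_def x_def r_def)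
qed

lemma has_derivative_lastc [derivative_intros]:
  "(f has_derivative f') F \<Longrightarrow> ((\<lambda>x. lastc (f x)) has_derivative (\<lambda>h. lastc (f' h))) F"
  by (rule bounded_linear.has_derivative[OF bounded_linear_lastc])

lemma has_derivative_horiz [derivative_intros]:
  "(f has_derivative f') F \<Longrightarrow> ((\<lambda>x. horiz (f x)) has_derivative (\<lambda>h. horiz (f' h))) F"
  by (rule bounded_linear.has_derivative[OF bounded_linear_horiz])

lemma hz_has_derivative:
  assumes "1 + z * lastc \<eta> \<noteq> 0"
  shows "(hz z has_derivative hz_differential z \<eta>) (at \<eta>)"
proof -
  define s D where "s = sqrt (1 - z\<^sup>2)" and "D = 1 + z * lastc \<eta>"
  have "D \<noteq> 0"
    using assms by (simp add: D_def)
  have denom: "((\<lambda>x. 1 + z * lastc x) has_derivative (\<lambda>h. z * lastc h)) (at \<eta>)"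
    by (auto intro!: derivative_eq_intros)
  have factor: "((\<lambda>x. s / (1 + z * lastc x)) has_derivative (\<lambda>h. - (s * z * lastc h / D\<^sup>2))) (at \<eta>)"
    by (rule has_derivative_eq_rhs[OF has_derivative_divide[OF has_derivative_const denom assms]])
      (use \<open>D \<noteq> 0\<close> in \<open>simp add: fun_eq_iff field_simps power2_eq_square flip: D_def\<close>)
  have height: "((\<lambda>x. (z + lastc x) / (1 + z * lastc x)) has_derivative (\<lambda>h. (1 - z\<^sup>2) * lastc h / D\<^sup>2)) (at \<eta>)"
    by (rule has_derivative_eq_rhs[OF has_derivative_divide[OF
          has_derivative_add[OF has_derivative_const has_derivative_lastc[OF has_derivative_ident]] denom assms]])
      (use \<open>D \<noteq> 0\<close> in \<open>simp add: fun_eq_iff field_simps power2_eq_square flip: D_def,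
        simp add: D_def algebra_simps power2_eq_square\<close>)
  have hz: "hz z = (\<lambda>x. (s / (1 + z * lastc x)) *\<^sub>R horiz x + ((z + lastc x) / (1 + z * lastc x)) *\<^sub>R unit_last)"
    by (simp add: fun_eq_iff hz_eq hz_factor_def s_def)
  show ?thesis
    unfolding hz by (rule has_derivative_eq_rhs[OF has_derivative_add[OF has_derivative_scaleR[OF factor
          has_derivative_horiz[OF has_derivative_ident]] has_derivative_scaleR_left[OF height]]])
      (simp add: fun_eq_iff hz_differential_def hz_factor_def algebra_simps flip: s_def D_def)
qed

lemma det_matrix_hz_differential:
  fixes \<eta> :: "real^'n::{finite,linorder}"
  assumes "1 + z * lastc \<eta> \<noteq> 0" "\<bar>z\<bar> < 1"
  shows "det (matrix (hz_differential z \<eta>)) = hz_factor z \<eta> ^ (CARD('n) + 1)"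
proof -
  let ?M = "matrix (hz_differential z \<eta>)" and ?a = "hz_factor z \<eta>"
  have entry: "?M $ i $ j = hz_differential z \<eta> (axis j 1) $ i" for i j
    by (simp add: matrix_def)
  have "?M $ i $ j = (if i = j then ?a else 0)" if "j \<noteq> lastidx" for i j
    using that by (simp add: entry hz_differential_def horiz_nth unit_last_nth lastc_def axis_def)
  moreover have "?M $ lastidx $ lastidx = (1 - z\<^sup>2) / (1 + z * lastc \<eta>)\<^sup>2"
    by (simp add: entry hz_differential_def horiz_nth unit_last_nth lastc_def)
  ultimately have "det ?M = ((1 - z\<^sup>2) / (1 + z * lastc \<eta>)\<^sup>2) * (\<Prod>i\<in>UNIV - {lastidx :: 'n}. ?a)"
    by (subst det_eq_prod_diagonal_if_offdiagonal_in_column[where l = lastidx])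
      (auto simp: prod.remove[of UNIV lastidx])
  also have "(1 - z\<^sup>2) / (1 + z * lastc \<eta>)\<^sup>2 = ?a\<^sup>2"
    using sqrt_one_minus_sq[OF assms(2)] by (simp add: hz_factor_def power_divide)
  also have "(\<Prod>i\<in>UNIV - {lastidx :: 'n}. ?a) = ?a ^ (CARD('n) - 1)"
    by (simp add: card_Diff_singleton)
  finally show ?thesis
    by (simp add: power_add[symmetric] Suc_diff_le)
qed

lemma linear_hz_differential: "1 + z * lastc \<eta> \<noteq> 0 \<Longrightarrow> linear (hz_differential z \<eta>)"
  using hz_has_derivative has_derivative_linear by blast

lemma frechet_derivative_hz: "1 + z * lastc \<eta> \<noteq> 0 \<Longrightarrow> frechet_derivative (hz z) (at \<eta>) = hz_differential z \<eta>"
  using hz_has_derivative frechet_derivative_at by metis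

lemma detl_map_hz_differential:
  fixes \<eta> :: "real^'n::{finite,linorder}"
  assumes "norm \<eta> = 1" "\<bar>z\<bar> < 1" "length xs = CARD('n)"
  shows "detl (map (hz_differential z \<eta>) xs) = hz_factor z \<eta> ^ (CARD('n) + 1) * detl xs"
  using hz_denominator_pos[OF assms(1,2)] assms(2,3)
  by (simp add: detl_map_linear linear_hz_differential det_matrix_hz_differential)

section \<open>Pullback of the volume forms\<close>

lemma hz_differential_tan_sphere:
  assumes "norm \<eta> = 1" "\<bar>z\<bar> < 1" "v \<in> tan_sphere \<eta>"
  shows "hz_differential z \<eta> v \<in> tan_sphere (hz z \<eta>)"
  using assms by (simp add: tan_sphere_def hz_differential_inner_hz)

lemma hz_Cz:
  assumes \<xi>: "norm \<xi> = 1" and z: "\<bar>z\<bar> < 1" and \<eta>: "\<eta> \<in> Cz 0 (gz z \<xi>)"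
  shows "hz z \<eta> \<in> Cz z \<xi>"
proof -
  have "norm \<eta> = 1" "gz z \<xi> \<bullet> \<eta> = 0"
    using \<eta> by (simp_all add: Cz_def subsph_def)
  then show ?thesis
    by (simp add: Cz_def subsph_def norm_hz[OF _ z] xi_inner_hz[OF \<xi> _ z])
qed

lemma hz_differential_tan_subsph:
  assumes \<xi>: "norm \<xi> = 1" and z: "\<bar>z\<bar> < 1" and \<eta>: "\<eta> \<in> Cz 0 (gz z \<xi>)"
    and v: "v \<in> tan_subsph (gz z \<xi>) \<eta>"
  shows "hz_differential z \<eta> v \<in> tan_subsph \<xi> (hz z \<eta>)"
proof -
  have "norm \<eta> = 1" "gz z \<xi> \<bullet> \<eta> = 0"
    using \<eta> by (simp_all add: Cz_def subsph_def)
  with v show ?thesis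
    by (simp add: tan_subsph_def hz_differential_inner_hz[OF _ z] hz_differential_inner_xi[OF \<xi> _ z])
qed

lemma hz_pullback_dSphere:
  fixes \<eta> :: "real^'n::{finite,linorder}"
  assumes \<eta>: "norm \<eta> = 1" and z: "\<bar>z\<bar> < 1" and n: "2 \<le> CARD('n)"
    and vs: "length vs = CARD('n) - 1" "set vs \<subseteq> tan_sphere \<eta>"
  shows "dSphere (hz z \<eta>) (map (hz_differential z \<eta>) vs) = hz_factor z \<eta> ^ (CARD('n) - 1) * dSphere \<eta> vs"
proof -
  let ?L = "hz_differential z \<eta>" and ?h = "hz z \<eta>" and ?a = "hz_factor z \<eta>"
  have h: "norm ?h = 1"
    using norm_hz[OF \<eta> z] .
  have Lvs: "set (map ?L vs) \<subseteq> tan_sphere ?h"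
    using vs(2) hz_differential_tan_sphere[OF \<eta> z] by auto
  have "?a\<^sup>2 * detl (?h # map ?L vs) = detl (?L \<eta> # map ?L vs)"
    using detl_Cons_tan_sphere[OF h _ Lvs, of "?L \<eta>"] vs(1) \<eta>
    by (simp add: hz_differential_inner_hz[OF \<eta> z] norm_eq_1)
  also have "\<dots> = ?a ^ (CARD('n) + 1) * detl (\<eta> # vs)"
    using detl_map_hz_differential[OF \<eta> z, of "\<eta> # vs"] vs(1) n by simp
  also have "\<dots> = ?a\<^sup>2 * (?a ^ (CARD('n) - 1) * detl (\<eta> # vs))"
    using n by (simp add: power_add[symmetric])
  finally have "detl (?h # map ?L vs) = ?a ^ (CARD('n) - 1) * detl (\<eta> # vs)"
    using hz_factor_pos[OF \<eta> z] by simp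
  then show ?thesis
    using vs Lvs by (simp add: dSphere_eq[OF h n] dSphere_eq[OF \<eta> n])
qed

lemma detl_hz_differential_subsph:
  fixes \<xi> \<eta> :: "real^'n::{finite,linorder}"
  assumes \<xi>: "norm \<xi> = 1" and z: "\<bar>z\<bar> < 1" and n: "3 \<le> CARD('n)" and \<eta>: "\<eta> \<in> Cz 0 (gz z \<xi>)"
    and vs: "length vs = CARD('n) - 2" "set vs \<subseteq> tan_subsph (gz z \<xi>) \<eta>"
  shows "detl (hz z \<eta> # \<xi> # map (hz_differential z \<eta>) vs)
    = sqrt (1 - z\<^sup>2 * (lastc \<xi>)\<^sup>2) * hz_factor z \<eta> ^ (CARD('n) - 2) * detl (\<eta> # gz z \<xi> # vs)"
proof -
  let ?g = "gz z \<xi>" and ?L = "hz_differential z \<eta>" and ?h = "hz z \<eta>" and ?a = "hz_factor z \<eta>"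
  define r where "r = sqrt (1 - z\<^sup>2 * (lastc \<xi>)\<^sup>2)"
  have unit: "norm \<eta> = 1" and perp: "?g \<bullet> \<eta> = 0"
    using \<eta> by (auto simp: Cz_def subsph_def)
  have h: "norm ?h = 1" and h\<xi>: "\<xi> \<bullet> ?h = z * lastc \<xi>"
    using hz_Cz[OF \<xi> z \<eta>] by (auto simp: Cz_def subsph_def)
  have "0 < ?a" "0 < r"
    using hz_factor_pos[OF unit z] sq_mult_sq_lastc_less_1[OF \<xi> z] by (simp_all add: r_def)
  have r: "1 - (\<xi> \<bullet> ?h)\<^sup>2 = r\<^sup>2" and "\<bar>\<xi> \<bullet> ?h\<bar> < 1"
    using h\<xi> sq_mult_sq_lastc_less_1[OF \<xi> z]
    by (simp_all add: r_def power_mult_distrib flip: abs_square_less_1)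
  have Lvs: "set (map ?L vs) \<subseteq> tan_subsph \<xi> ?h"
    using vs(2) hz_differential_tan_subsph[OF \<xi> z \<eta>] by auto
  have "?L \<eta> \<bullet> ?h = ?a\<^sup>2" "?L ?g \<bullet> \<xi> = ?a * r" "?L ?g \<bullet> ?h = 0"
    using hz_differential_inner_hz[OF unit z] hz_differential_inner_xi[OF \<xi> unit z perp] unit
      norm_gz[OF \<xi> z] perp by (simp_all add: norm_eq_1 inner_commute r_def)
  then have expand: "detl (?L \<eta> # ?L ?g # map ?L vs) * r\<^sup>2 = ?a ^ 3 * r * detl (?h # \<xi> # map ?L vs)"
    using detl_Cons_Cons_tan_subsph[OF h \<xi> \<open>\<bar>\<xi> \<bullet> ?h\<bar> < 1\<close> _ _ Lvs, of "?L \<eta>" "?L ?g"] n vs(1) r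
    by (simp add: power2_eq_square power3_eq_cube)
  have "?a ^ 3 * r * detl (?h # \<xi> # map ?L vs) = detl (?L \<eta> # ?L ?g # map ?L vs) * r\<^sup>2"
    by (rule expand[symmetric])
  also have "\<dots> = ?a ^ (CARD('n) + 1) * detl (\<eta> # ?g # vs) * r\<^sup>2"
    using detl_map_hz_differential[OF unit z, of "\<eta> # ?g # vs"] vs(1) n by simp
  also have "?a ^ (CARD('n) + 1) = ?a ^ 3 * ?a ^ (CARD('n) - 2)"
  proof -
    have "CARD('n) + 1 = 3 + (CARD('n) - 2)"
      using n by simp
    then show ?thesis
      by (simp only: power_add)
  qed
  finally have "?a ^ 3 * r * detl (?h # \<xi> # map ?L vs) = ?a ^ 3 * r * (r * ?a ^ (CARD('n) - 2) * detl (\<eta> # ?g # vs))"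
    by (simp add: power2_eq_square mult_ac)
  then show ?thesis
    using \<open>0 < ?a\<close> \<open>0 < r\<close> by (simp flip: r_def)
qed

lemma hz_pullback_dSub:
  fixes \<xi> \<eta> :: "real^'n::{finite,linorder}"
  assumes \<xi>: "norm \<xi> = 1" and z: "\<bar>z\<bar> < 1" and n: "3 \<le> CARD('n)" and \<eta>: "\<eta> \<in> Cz 0 (gz z \<xi>)"
    and vs: "length vs = CARD('n) - 2" "set vs \<subseteq> tan_subsph (gz z \<xi>) \<eta>"
  shows "dSub \<xi> (hz z \<eta>) (map (hz_differential z \<eta>) vs) = hz_factor z \<eta> ^ (CARD('n) - 2) * dSub (gz z \<xi>) \<eta> vs"
proof -
  have unit: "norm \<eta> = 1" and perp: "gz z \<xi> \<bullet> \<eta> = 0"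
    using \<eta> by (auto simp: Cz_def subsph_def)
  have h: "norm (hz z \<eta>) = 1" and h\<xi>: "\<xi> \<bullet> hz z \<eta> = z * lastc \<xi>"
    using hz_Cz[OF \<xi> z \<eta>] by (auto simp: Cz_def subsph_def)
  have "0 < 1 - z\<^sup>2 * (lastc \<xi>)\<^sup>2"
    using sq_mult_sq_lastc_less_1[OF \<xi> z] by simp
  moreover have "\<bar>\<xi> \<bullet> hz z \<eta>\<bar> < 1"
    using h\<xi> sq_mult_sq_lastc_less_1[OF \<xi> z] by (simp add: power_mult_distrib flip: abs_square_less_1)
  moreover have "set (map (hz_differential z \<eta>) vs) \<subseteq> tan_subsph \<xi> (hz z \<eta>)"
    using vs(2) hz_differential_tan_subsph[OF \<xi> z \<eta>] by auto
  ultimately show ?thesis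
    using vs perp detl_hz_differential_subsph[OF \<xi> z n \<eta> vs]
    by (simp add: dSub_eq[OF h \<xi> _ n] dSub_eq[OF unit norm_gz[OF \<xi> z] _ n] h\<xi> power_mult_distrib)
qed

theorem mainTheorem2:
  fixes z :: real and \<xi> :: "real^'n::{finite,linorder}"
  assumes "CARD('n) \<ge> 3" and "-1 < z" and "z < 1" and "\<xi> \<in> sphere 0 1"
  shows "(\<forall>\<eta> \<in> Cz 0 (gz z \<xi>). \<forall>vs. length vs = CARD('n) - 2 \<and> set vs \<subseteq> tan_subsph (gz z \<xi>) \<eta> \<longrightarrow>
            dSub \<xi> (hz z \<eta>) (map (frechet_derivative (hz z) (at \<eta>)) vs)
            = (sqrt (1 - z\<^sup>2) / (1 + z * lastc \<eta>)) ^ (CARD('n) - 2) * dSub (gz z \<xi>) \<eta> vs)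
       \<and> (\<forall>\<eta> \<in> (sphere 0 1 :: (real^'n::{finite,linorder}) set). \<forall>vs. length vs = CARD('n) - 1 \<and> set vs \<subseteq> tan_sphere \<eta> \<longrightarrow>
            dSphere (hz z \<eta>) (map (frechet_derivative (hz z) (at \<eta>)) vs)
            = (sqrt (1 - z\<^sup>2) / (1 + z * lastc \<eta>)) ^ (CARD('n) - 1) * dSphere \<eta> vs)"
proof -
  have z: "\<bar>z\<bar> < 1" and \<xi>: "norm \<xi> = 1"
    using assms(2-4) by auto
  have derivative: "frechet_derivative (hz z) (at \<eta>) = hz_differential z \<eta>" if "norm \<eta> = 1" for \<eta> :: "real^'n::{finite,linorder}"
    using hz_denominator_pos[OF that z] by (intro frechet_derivative_hz) simp
  show ?thesis
  proof (intro conjI ballI allI impI)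
    fix \<eta> vs
    assume "\<eta> \<in> Cz 0 (gz z \<xi>)" "length vs = CARD('n) - 2 \<and> set vs \<subseteq> tan_subsph (gz z \<xi>) \<eta>"
    moreover from this have "norm \<eta> = 1"
      by (simp add: Cz_def subsph_def)
    ultimately show "dSub \<xi> (hz z \<eta>) (map (frechet_derivative (hz z) (at \<eta>)) vs)
        = (sqrt (1 - z\<^sup>2) / (1 + z * lastc \<eta>)) ^ (CARD('n) - 2) * dSub (gz z \<xi>) \<eta> vs"
      using hz_pullback_dSub[OF \<xi> z assms(1)] by (simp add: derivative hz_factor_def)
  next
    fix \<eta> vs
    assume "\<eta> \<in> (sphere 0 1 :: (real^'n::{finite,linorder}) set)" "length vs = CARD('n) - 1 \<and> set vs \<subseteq> tan_sphere \<eta>"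
    then show "dSphere (hz z \<eta>) (map (frechet_derivative (hz z) (at \<eta>)) vs)
        = (sqrt (1 - z\<^sup>2) / (1 + z * lastc \<eta>)) ^ (CARD('n) - 1) * dSphere \<eta> vs"
      using hz_pullback_dSphere[of \<eta> z vs] z assms(1) by (simp add: derivative hz_factor_def)
  qed
qed

end
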